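(* In the setting of the blurring mean-shift iteration with $f$ PDD and fixed positive weights, let $r_M=\max_{i,j}\|x_i-x_j\|$ and write $f(u)=\varphi(\|u\|)$. If $\varphi(r_M)>0$, then there exists $c\in\mathbb{R}^p$ such that $\lim_{t\to\infty}x_i^{(t)}=c$ for all $i=1,\dots,N$.
   Context: Setting: $x_1,\dots,x_N\in\mathbb{R}^p$, fixed weights $w_1,\dots,w_N>0$, and $f:\mathbb{R}^p\to[0,1]$ PDD, meaning: $f(u)=1$ iff $u=0$; $f(u)=\varphi(\|u\|)$ for some $\varphi:[0,\infty)\to[0,1]$; $\varphi$ is decreasing (non-increasing). The blurring mean-shift iteration is $x_i^{(0)}=x_i$ and $x_i^{(t+1)}=\frac{\sum_{j=1}^N f(x_i^{(t)}-x_j^{(t)})w_jx_j^{(t)}}{\sum_{j=1}^N f(x_i^{(t)}-x_j^{(t)})w_j}$. *)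

theory Defs
  imports "HOL-Analysis.Analysis"
begin

definition PDD :: "('a::real_normed_vector \<Rightarrow> real) \<Rightarrow> (real \<Rightarrow> real) \<Rightarrow> bool" where
  "PDD f \<phi> \<longleftrightarrow>
     (\<forall>u. f u = \<phi> (norm u)) \<and>
     (\<forall>u. f u = 1 \<longleftrightarrow> u = 0) \<and>
     (\<forall>r\<ge>0. 0 \<le> \<phi> r \<and> \<phi> r \<le> 1) \<and>
     (\<forall>a b. 0 \<le> a \<longrightarrow> a \<le> b \<longrightarrow> \<phi> b \<le> \<phi> a)"

fun bms :: "('a::real_normed_vector \<Rightarrow> real) \<Rightarrow> (nat \<Rightarrow> real) \<Rightarrow> nat \<Rightarrow> (nat \<Rightarrow> 'a) \<Rightarrow> nat \<Rightarrow> nat \<Rightarrow> 'a" where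
  "bms f w N x 0 = x"
| "bms f w N x (Suc t) = (\<lambda>i.
     (\<Sum>j<N. (f (bms f w N x t i - bms f w N x t j) * w j) *\<^sub>R bms f w N x t j) /\<^sub>R
     (\<Sum>j<N. f (bms f w N x t i - bms f w N x t j) * w j))"

end

theory Submission
  imports Defs
begin

(* One step of blurring mean shift replaces every point by a convex
   combination of all current points, with coefficients (the normalised kernel
   weights) forming a row-stochastic matrix.  Two facts about such steps drive
   the proof:
   (1) a convex combination never increases the diameter of the point set, so
       all pairwise distances stay below r_M for ever, hence every kernel value is
       at least phi(r_M) > 0 and every coefficient is bounded below by a uniform
       eta = phi(r_M) * min w / sum w > 0;
   (2) if all coefficients are at least eta, the range of each coordinate
       shrinks by the factor (1 - eta) per step (a classical consensus argument),
       so the coordinatewise maxima and minima converge to a common limit. *)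

lemma contracting_seq_tendsto_zero:
  fixes g :: "nat \<Rightarrow> real"
  assumes nonneg: "\<And>t. 0 \<le> g t" and contr: "\<And>t. g (Suc t) \<le> q * g t"
    and q: "0 \<le> q" "q < 1"
  shows "g \<longlonglongrightarrow> 0"
proof -
  have bound: "g t \<le> q ^ t * g 0" for t
  proof (induction t)
    case (Suc t)
    have "g (Suc t) \<le> q * g t" by (rule contr)
    also have "\<dots> \<le> q * (q ^ t * g 0)" using Suc q by (intro mult_left_mono) auto
    finally show ?case by simp
  qed simp
  have lim: "(\<lambda>t. q ^ t * g 0) \<longlonglongrightarrow> 0"
    using q by (intro tendsto_mult_left_zero LIMSEQ_power_zero) auto
  show ?thesis
    by (rule tendsto_sandwich[OF _ _ tendsto_const lim]) (use nonneg bound in auto)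
qed

lemma nested_intervals_common_limit:
  fixes m M :: "nat \<Rightarrow> real"
  assumes "incseq m" "decseq M" "\<And>t. m t \<le> M t" "(\<lambda>t. M t - m t) \<longlonglongrightarrow> 0"
  shows "m \<longlonglongrightarrow> (INF t. M t) \<and> M \<longlonglongrightarrow> (INF t. M t)"
proof -
  have "bdd_below (range M)"
    using assms(1,3) by (intro bdd_belowI[of _ "m 0"]) (auto intro: order_trans incseqD)
  then have M_lim: "M \<longlonglongrightarrow> (INF t. M t)" using assms(2) by (rule LIMSEQ_decseq_INF)
  have "(\<lambda>t. M t - (M t - m t)) \<longlonglongrightarrow> (INF t. M t) - 0"
    by (intro tendsto_diff M_lim assms(4))
  with M_lim show ?thesis by simp
qed

lemma convex_comb_diameter:
  fixes y :: "nat \<Rightarrow> 'a::real_normed_vector"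
  assumes a0: "\<And>i j. i<N \<Longrightarrow> j<N \<Longrightarrow> a i j \<ge> 0"
    and a1: "\<And>i. i<N \<Longrightarrow> (\<Sum>j<N. a i j) = 1"
    and R: "\<And>j l. j<N \<Longrightarrow> l<N \<Longrightarrow> norm (y j - y l) \<le> R"
    and i: "i<N" and k: "k<N"
  shows "norm ((\<Sum>j<N. a i j *\<^sub>R y j) - (\<Sum>l<N. a k l *\<^sub>R y l)) \<le> R"
proof -
  (* Both averages are rewritten as the same double sum over the product weights. *)
  have e1: "(\<Sum>j<N. a i j *\<^sub>R y j) = (\<Sum>j<N. \<Sum>l<N. (a i j * a k l) *\<^sub>R y j)"
    by (simp add: scaleR_sum_left[symmetric] sum_distrib_left[symmetric] a1[OF k])
  have e2: "(\<Sum>l<N. a k l *\<^sub>R y l) = (\<Sum>j<N. \<Sum>l<N. (a i j * a k l) *\<^sub>R y l)"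
    by (subst sum.swap)
       (simp add: scaleR_sum_left[symmetric] sum_distrib_right[symmetric] a1[OF i])
  have "(\<Sum>j<N. a i j *\<^sub>R y j) - (\<Sum>l<N. a k l *\<^sub>R y l)
        = (\<Sum>j<N. \<Sum>l<N. (a i j * a k l) *\<^sub>R (y j - y l))"
    unfolding e1 e2 by (simp add: sum_subtractf scaleR_diff_right)
  also have "norm \<dots> \<le> (\<Sum>j<N. \<Sum>l<N. norm ((a i j * a k l) *\<^sub>R (y j - y l)))"
    by (rule order_trans[OF norm_sum sum_mono[OF norm_sum]])
  also have "\<dots> \<le> (\<Sum>j<N. \<Sum>l<N. (a i j * a k l) * R)"
    by (intro sum_mono) (simp add: a0 i k R mult_left_mono)
  also have "\<dots> = R"
    by (simp add: sum_distrib_right[symmetric] sum_distrib_left[symmetric] a1 i k)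
  finally show ?thesis .
qed

lemma convex_comb_shrinks_range:
  fixes a y :: "nat \<Rightarrow> real"
  assumes a0: "\<And>j. j<N \<Longrightarrow> a j \<ge> 0" and a1: "(\<Sum>j<N. a j) = 1"
    and range: "\<And>j. j<N \<Longrightarrow> m \<le> y j \<and> y j \<le> M"
    and j0: "j0 < N" "y j0 = m" and eta: "\<eta> \<le> a j0"
  shows "m \<le> (\<Sum>j<N. a j * y j) \<and> (\<Sum>j<N. a j * y j) \<le> M - \<eta> * (M - m)"
proof
  have "(\<Sum>j<N. a j * m) \<le> (\<Sum>j<N. a j * y j)"
    by (rule sum_mono) (simp add: a0 range mult_left_mono)
  then show "m \<le> (\<Sum>j<N. a j * y j)" by (simp add: sum_distrib_right[symmetric] a1)
next
  have "\<eta> * (M - m) \<le> a j0 * (M - y j0)"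
    using eta range[OF j0(1)] j0(2) by (simp add: mult_right_mono)
  also have "\<dots> \<le> (\<Sum>j<N. a j * (M - y j))"
    by (rule member_le_sum[where f="\<lambda>j. a j * (M - y j)"]) (use j0 a0 range in auto)
  also have "\<dots> = M - (\<Sum>j<N. a j * y j)"
    by (simp add: right_diff_distrib sum_subtractf sum_distrib_right[symmetric] a1)
  finally show "(\<Sum>j<N. a j * y j) \<le> M - \<eta> * (M - m)" by simp
qed

(* The
   bracket [min, max] of the current values is nested and its length decays
   like (1 - eta)^t. *)
lemma consensus_real:
  fixes y :: "nat \<Rightarrow> nat \<Rightarrow> real" and A :: "nat \<Rightarrow> nat \<Rightarrow> nat \<Rightarrow> real"
  assumes N: "0 < N"
    and A0: "\<And>t i j. i<N \<Longrightarrow> j<N \<Longrightarrow> 0 \<le> A t i j"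
    and A1: "\<And>t i. i<N \<Longrightarrow> (\<Sum>j<N. A t i j) = 1"
    and Aeta: "\<And>t i j. i<N \<Longrightarrow> j<N \<Longrightarrow> \<eta> \<le> A t i j" and eta: "0 < \<eta>"
    and step: "\<And>t i. i<N \<Longrightarrow> y (Suc t) i = (\<Sum>j<N. A t i j * y t j)"
  shows "\<exists>L. \<forall>i<N. (\<lambda>t. y t i) \<longlonglongrightarrow> L"
proof -
  define M where "M t = Max ((\<lambda>j. y t j) ` {..<N})" for t
  define m where "m t = Min ((\<lambda>j. y t j) ` {..<N})" for t
  have bracket: "\<And>t j. j<N \<Longrightarrow> m t \<le> y t j \<and> y t j \<le> M t"
    unfolding M_def m_def by simp
  have argmin: "\<exists>j0<N. y t j0 = m t" for t
  proof -
    have "m t \<in> (\<lambda>j. y t j) ` {..<N}" unfolding m_def using N by (intro Min_in) auto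
    then show ?thesis by auto
  qed
  have eta1: "\<eta> \<le> 1"
    using Aeta[OF N N, of 0] member_le_sum[of 0 "{..<N}" "A 0 0"] A0 A1[OF N] N by auto
  have next_bracket:
    "m t \<le> y (Suc t) i \<and> y (Suc t) i \<le> M t - \<eta> * (M t - m t)" if i: "i<N" for t i
  proof -
    obtain j0 where "j0<N" "y t j0 = m t" using argmin by blast
    then show ?thesis unfolding step[OF i]
      by (intro convex_comb_shrinks_range) (use A0 A1 Aeta bracket i in auto)
  qed
  have M_step: "M (Suc t) \<le> M t - \<eta> * (M t - m t)" for t
    unfolding M_def[of "Suc t"] using N next_bracket by (subst Max_le_iff) auto
  have m_step: "m t \<le> m (Suc t)" for t
    unfolding m_def[of "Suc t"] using N next_bracket by (subst Min_ge_iff) auto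
  have gap_nonneg: "0 \<le> M t - m t" for t using bracket[OF N, of t] by simp
  have "M (Suc t) \<le> M t" for t
    using M_step[of t] mult_nonneg_nonneg[OF less_imp_le[OF eta] gap_nonneg[of t]] by linarith
  then have "decseq M" by (simp add: decseq_Suc_iff)
  moreover have "incseq m" using m_step by (simp add: incseq_Suc_iff)
  moreover have "(\<lambda>t. M t - m t) \<longlonglongrightarrow> 0"
  proof (rule contracting_seq_tendsto_zero[OF gap_nonneg])
    show "M (Suc t) - m (Suc t) \<le> (1 - \<eta>) * (M t - m t)" for t
      using M_step[of t] m_step[of t] by (simp add: algebra_simps)
  qed (use eta eta1 in auto)
  moreover have "m t \<le> M t" for t using gap_nonneg[of t] by simp
  ultimately have m_lim: "m \<longlonglongrightarrow> (INF t. M t)" and M_lim: "M \<longlonglongrightarrow> (INF t. M t)"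
    using nested_intervals_common_limit by blast+
  have "(\<lambda>t. y t i) \<longlonglongrightarrow> (INF t. M t)" if "i<N" for i
    by (rule tendsto_sandwich[OF _ _ m_lim M_lim]) (use bracket that in auto)
  then show ?thesis by blast
qed

theorem consensus:
  fixes X :: "nat \<Rightarrow> nat \<Rightarrow> 'a::euclidean_space" and A :: "nat \<Rightarrow> nat \<Rightarrow> nat \<Rightarrow> real"
  assumes N: "0 < N"
    and A0: "\<And>t i j. i<N \<Longrightarrow> j<N \<Longrightarrow> 0 \<le> A t i j"
    and A1: "\<And>t i. i<N \<Longrightarrow> (\<Sum>j<N. A t i j) = 1"
    and Aeta: "\<And>t i j. i<N \<Longrightarrow> j<N \<Longrightarrow> \<eta> \<le> A t i j" and eta: "0 < \<eta>"
    and step: "\<And>t i. i<N \<Longrightarrow> X (Suc t) i = (\<Sum>j<N. A t i j *\<^sub>R X t j)"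
  shows "\<exists>c. \<forall>i<N. (\<lambda>t. X t i) \<longlonglongrightarrow> c"
proof -
  have "\<exists>L. \<forall>i<N. (\<lambda>t. X t i \<bullet> b) \<longlonglongrightarrow> L" for b
    by (rule consensus_real[OF N A0 A1 Aeta eta]) (simp_all add: step inner_sum_left)
  then obtain L where L: "\<And>b i. i<N \<Longrightarrow> (\<lambda>t. X t i \<bullet> b) \<longlonglongrightarrow> L b" by metis
  have "(\<lambda>t. \<Sum>b\<in>Basis. (X t i \<bullet> b) *\<^sub>R b) \<longlonglongrightarrow> (\<Sum>b\<in>Basis. L b *\<^sub>R b)" if "i<N" for i
    by (intro tendsto_intros L that)
  then show ?thesis by (auto simp: euclidean_representation)
qed

lemma PDD_kernel_bounds:
  assumes "PDD f \<phi>"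
  shows "0 \<le> f u" "f u \<le> 1" "f 0 = 1" "norm u \<le> r \<Longrightarrow> \<phi> r \<le> f u"
proof -
  have f: "\<And>u. f u = \<phi> (norm u)" and one: "\<And>u. f u = 1 \<longleftrightarrow> u = 0"
    and unit: "\<And>r. 0 \<le> r \<Longrightarrow> 0 \<le> \<phi> r \<and> \<phi> r \<le> 1"
    and anti: "\<And>a b. 0 \<le> a \<Longrightarrow> a \<le> b \<Longrightarrow> \<phi> b \<le> \<phi> a"
    using assms unfolding PDD_def by blast+
  show "0 \<le> f u" "f u \<le> 1" using f unit by simp_all
  show "f 0 = 1" using one by simp
  show "norm u \<le> r \<Longrightarrow> \<phi> r \<le> f u" using f anti by simp
qed

definition bms_coef ::
  "('a::real_normed_vector \<Rightarrow> real) \<Rightarrow> (nat \<Rightarrow> real) \<Rightarrow> nat \<Rightarrow> (nat \<Rightarrow> 'a) \<Rightarrow> nat \<Rightarrow> nat \<Rightarrow> nat \<Rightarrow> real"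
  where "bms_coef f w N x t i j =
    f (bms f w N x t i - bms f w N x t j) * w j /
    (\<Sum>l<N. f (bms f w N x t i - bms f w N x t l) * w l)"

lemma bms_Suc_coef:
  "bms f w N x (Suc t) i = (\<Sum>j<N. bms_coef f w N x t i j *\<^sub>R bms f w N x t j)"
  by (simp add: bms_coef_def scaleR_sum_right divide_inverse mult.commute)

(* The normaliser is positive: it contains the term f 0 * w i = w i > 0. *)
lemma bms_normaliser_pos:
  assumes w: "\<forall>j<N. w j > 0" and pdd: "PDD f \<phi>" and i: "i<N"
  shows "0 < (\<Sum>l<N. f (bms f w N x t i - bms f w N x t l) * w l)"
proof -
  have "f (bms f w N x t i - bms f w N x t i) * w i
        \<le> (\<Sum>l<N. f (bms f w N x t i - bms f w N x t l) * w l)"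
    by (rule member_le_sum) (use i w PDD_kernel_bounds[OF pdd] in \<open>auto intro: less_imp_le\<close>)
  moreover have "0 < w i" using w i by simp
  ultimately show ?thesis using PDD_kernel_bounds(3)[OF pdd] by simp
qed

lemma bms_coef_stochastic:
  assumes w: "\<forall>j<N. w j > 0" and pdd: "PDD f \<phi>" and i: "i<N"
  shows "\<And>j. j<N \<Longrightarrow> 0 \<le> bms_coef f w N x t i j" "(\<Sum>j<N. bms_coef f w N x t i j) = 1"
  using bms_normaliser_pos[OF w pdd i, of x t] w PDD_kernel_bounds(1)[OF pdd]
  by (auto simp: bms_coef_def sum_divide_distrib[symmetric] less_imp_le)

lemma bms_diameter:
  assumes w: "\<forall>j<N. w j > 0" and pdd: "PDD f \<phi>"
    and R: "\<And>i j. i<N \<Longrightarrow> j<N \<Longrightarrow> norm (x i - x j) \<le> R"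
    and i: "i<N" and j: "j<N"
  shows "norm (bms f w N x t i - bms f w N x t j) \<le> R"
  using i j
proof (induction t arbitrary: i j)
  case (Suc t)
  show ?case unfolding bms_Suc_coef
    by (rule convex_comb_diameter) (use bms_coef_stochastic[OF w pdd] Suc in auto)
qed (simp add: R)

lemma bms_coef_lower_bound:
  assumes w: "\<forall>j<N. w j > 0" and pdd: "PDD f \<phi>"
    and R: "\<And>i j. i<N \<Longrightarrow> j<N \<Longrightarrow> norm (x i - x j) \<le> R" and phiR: "0 \<le> \<phi> R"
    and c: "0 \<le> c" "\<And>j. j<N \<Longrightarrow> c \<le> w j"
    and i: "i<N" and j: "j<N"
  shows "\<phi> R * c / (\<Sum>l<N. w l) \<le> bms_coef f w N x t i j"
proof -
  let ?S = "\<Sum>l<N. f (bms f w N x t i - bms f w N x t l) * w l"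
  have S_pos: "0 < ?S" by (rule bms_normaliser_pos[OF w pdd i])
  have "?S \<le> (\<Sum>l<N. w l)"
    by (rule sum_mono) (use PDD_kernel_bounds[OF pdd] w in \<open>auto intro: mult_left_le_one_le less_imp_le\<close>)
  then have "\<phi> R * c / (\<Sum>l<N. w l) \<le> \<phi> R * c / ?S"
    using S_pos phiR c by (intro divide_left_mono) auto
  also have "\<phi> R * c \<le> f (bms f w N x t i - bms f w N x t j) * w j"
    using PDD_kernel_bounds[OF pdd] bms_diameter[OF w pdd R i j] c(2)[OF j] c(1)
    by (intro mult_mono) auto
  then have "\<phi> R * c / ?S \<le> bms_coef f w N x t i j"
    unfolding bms_coef_def using S_pos by (intro divide_right_mono) auto
  finally show ?thesis .
qed

lemma max_pairwise_dist_ge: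
  fixes x :: "nat \<Rightarrow> 'a::real_normed_vector"
  assumes "i<N" "j<N"
  shows "norm (x i - x j) \<le> Max {norm (x i - x j) | i j. i < N \<and> j < N}"
proof (rule Max_ge)
  have "{norm (x i - x j) | i j. i < N \<and> j < N} = (\<lambda>(i,j). norm (x i - x j)) ` ({..<N} \<times> {..<N})"
    by auto
  then show "finite {norm (x i - x j) | i j. i < N \<and> j < N}" by simp
qed (use assms in blast)

theorem corollary1:
  fixes x :: "nat \<Rightarrow> 'a::euclidean_space" and w :: "nat \<Rightarrow> real"
    and f :: "'a \<Rightarrow> real" and \<phi> :: "real \<Rightarrow> real" and N :: nat
  assumes "\<forall>j<N. w j > 0"
    and "PDD f \<phi>"
    and "\<phi> (Max {norm (x i - x j) | i j. i < N \<and> j < N}) > 0"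
  shows "\<exists>c. \<forall>i<N. (\<lambda>t. bms f w N x t i) \<longlonglongrightarrow> c"
proof (cases "N = 0")
  case False
  then have N: "0 < N" by simp
  define rM where "rM = Max {norm (x i - x j) | i j. i < N \<and> j < N}"
  define wmin where "wmin = Min (w ` {..<N})"
  have rM: "\<And>i j. i<N \<Longrightarrow> j<N \<Longrightarrow> norm (x i - x j) \<le> rM"
    unfolding rM_def by (rule max_pairwise_dist_ge)
  have wmin: "0 < wmin" "\<And>j. j<N \<Longrightarrow> wmin \<le> w j"
    using N assms(1) unfolding wmin_def by (subst Min_gr_iff) auto
  have "0 < (\<Sum>l<N. w l)" using N assms(1) by (intro sum_pos) auto
  then have eta: "0 < \<phi> rM * wmin / (\<Sum>l<N. w l)"
    using assms(3) wmin(1) by (simp add: rM_def)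
  show ?thesis
    using bms_coef_stochastic[OF assms(1,2)] bms_Suc_coef[of f w N x]
      bms_coef_lower_bound[OF assms(1,2) rM _ less_imp_le[OF wmin(1)] wmin(2)] assms(3)
    by (intro consensus[OF N _ _ _ eta]) (auto simp: rM_def)
qed simp

end
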